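(* Let $G$ be a connected graph with $|V(G)|\ge 3$ and $L(G)=2l(G)$. For any maximum matchings $F_L,F_l$ of $G$ with $\nu(G\setminus F_L)=L(G)$ and $\nu(G\setminus F_l)=l(G)$, every connected component of the subgraph with edge set $F_L\triangle F_l$ (and vertex set $V(F_L\triangle F_l)$) is a path of length $2$.
   Context: Graphs are finite, undirected, without loops or multiple edges. $\nu(G)$ denotes the maximum size of a matching of $G$; a matching is maximum if it has $\nu(G)$ edges. For $F\subseteq E(G)$, $G\setminus F$ is the graph with vertex set $V(G)$ and edge set $E(G)\setminus F$, and $V(F)$ is the set of vertices incident to some edge of $F$. $\triangle$ denotes symmetric difference. Define $L(G)=\max\{\nu(G\setminus F): F \text{ a maximum matching of } G\}$ and $l(G)=\min\{\nu(G\setminus F): F \text{ a maximum matching of } G\}$. *)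

theory Defs
  imports Main
begin

definition graph :: "'a set \<Rightarrow> 'a set set \<Rightarrow> bool" where
  "graph V E \<longleftrightarrow> finite V \<and> (\<forall>e\<in>E. \<exists>u v. e = {u, v} \<and> u \<noteq> v \<and> u \<in> V \<and> v \<in> V)"

definition matching :: "'a set set \<Rightarrow> 'a set set \<Rightarrow> bool" where
  "matching E M \<longleftrightarrow> M \<subseteq> E \<and> (\<forall>e1\<in>M. \<forall>e2\<in>M. e1 \<noteq> e2 \<longrightarrow> e1 \<inter> e2 = {})"

definition nu :: "'a set set \<Rightarrow> nat" where
  "nu E = Max (card ` {M. matching E M})"

definition max_matching :: "'a set set \<Rightarrow> 'a set set \<Rightarrow> bool" where
  "max_matching E M \<longleftrightarrow> matching E M \<and> card M = nu E"

text \<open>L(G) and l(G); G minus F keeps the vertex set, so only edges matter.\<close>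
definition LL :: "'a set set \<Rightarrow> nat" where
  "LL E = Max ((\<lambda>F. nu (E - F)) ` {F. max_matching E F})"

definition ll :: "'a set set \<Rightarrow> nat" where
  "ll E = Min ((\<lambda>F. nu (E - F)) ` {F. max_matching E F})"

definition adj :: "'a set set \<Rightarrow> 'a \<Rightarrow> 'a \<Rightarrow> bool" where
  "adj E u v \<longleftrightarrow> {u, v} \<in> E"

definition connected :: "'a set \<Rightarrow> 'a set set \<Rightarrow> bool" where
  "connected V E \<longleftrightarrow> (\<forall>u\<in>V. \<forall>v\<in>V. (adj E)\<^sup>*\<^sup>* u v)"

definition components :: "'a set \<Rightarrow> 'a set set \<Rightarrow> 'a set set" where
  "components V E = {{v \<in> V. (adj E)\<^sup>*\<^sup>* u v} | u. u \<in> V}"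

definition is_path2 :: "'a set \<Rightarrow> 'a set set \<Rightarrow> bool" where
  "is_path2 C D \<longleftrightarrow> (\<exists>a b c. distinct [a, b, c] \<and> C = {a, b, c} \<and>
      {e \<in> D. e \<subseteq> C} = {{a, b}, {b, c}})"

end

theory Submission
  imports Defs
begin

(* Let F_L, F_l be maximum matchings with nu(G - F_L) = L(G) = 2 l(G) = 2 nu(G - F_l), and put
   A = F_L - F_l, B = F_l - F_L.  The proof has a counting part and a structural part.

   Counting: |A| = |B|; A is a matching of G - F_l, so |A| <= l.  If M is a maximum matching of
   G - F_L, then M - F_l is a matching of G - F_l and M \<inter> F_l \<subseteq> B, so
   2l = |M| <= l + |B| = l + |A| <= 2l.  Hence B \<subseteq> M and |M - F_l| = l.  From this,
   (i) no edge of A has both endpoints covered by B (else it augments M - F_l in G - F_l), and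
   (ii) no edge of B has both endpoints covered by A (else F_l - {f} plus the two A-edges at the
   ends of f is a larger matching of G).  By maximality of F_L and F_l, every edge of A meets B
   and vice versa.  So every edge of A \<union> B has exactly one endpoint covered by the other matching.

   Structure: for two matchings with this property every component of their union is a path
   a - b - c with {a,b} in one matching and {b,c} in the other. *)

lemma graph_finite_edges: "graph V E \<Longrightarrow> finite E"
  unfolding graph_def by (rule finite_subset[of E "Pow V"]) auto

lemma graph_edge_at:
  assumes "graph V E" "e \<in> E" "x \<in> e"
  shows "\<exists>a. e = {a, x} \<and> a \<noteq> x"
  using assms unfolding graph_def by (auto simp: insert_commute)

lemma matching_finite: "finite E \<Longrightarrow> matching E M \<Longrightarrow> finite M"
  unfolding matching_def using finite_subset[of M E] by blast

lemma finite_matchings: "finite E \<Longrightarrow> finite {M. matching E M}"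
  unfolding matching_def by (rule finite_subset[of _ "Pow E"]) auto

lemma card_le_nu: "finite E \<Longrightarrow> matching E M \<Longrightarrow> card M \<le> nu E"
  unfolding nu_def using finite_matchings by (intro Max_ge) auto

lemma nu_attained: "finite E \<Longrightarrow> \<exists>M. matching E M \<and> card M = nu E"
proof -
  assume "finite E"
  have "matching E {}" by (simp add: matching_def)
  then have "nu E \<in> card ` {M. matching E M}"
    unfolding nu_def using finite_matchings[OF \<open>finite E\<close>] by (intro Max_in) auto
  then show ?thesis by auto
qed

lemma matching_unique_edge:
  "matching E M \<Longrightarrow> g \<in> M \<Longrightarrow> h \<in> M \<Longrightarrow> x \<in> g \<Longrightarrow> x \<in> h \<Longrightarrow> g = h"
  unfolding matching_def by blast

lemma matching_insert:
  "matching E M \<Longrightarrow> e \<in> E \<Longrightarrow> \<forall>g\<in>M. g \<inter> e = {} \<Longrightarrow> matching E (insert e M)"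
  unfolding matching_def by blast

lemma matching_Diff: "matching E M \<Longrightarrow> matching E (M - N)"
  unfolding matching_def by blast

lemma free_edge_card_lt_nu:
  assumes "finite E" "matching E N" "e \<in> E - N" "\<forall>g\<in>N. g \<inter> e = {}"
  shows "card N < nu E"
proof -
  have "matching E (insert e N)"
    using assms(2-4) by (intro matching_insert) auto
  then have "card (insert e N) \<le> nu E" by (rule card_le_nu[OF assms(1)])
  moreover have "finite N" using assms(1,2) by (rule matching_finite)
  ultimately show ?thesis using assms(3) by simp
qed

lemma covering_edge_in_difference:
  assumes "matching E P" "e \<in> P - Q" "x \<in> e" "f \<in> Q" "x \<in> f"
  shows "f \<in> Q - P"
proof -
  have "f \<notin> P"
  proof
    assume "f \<in> P"
    then have "f = e" using matching_unique_edge[OF assms(1)] assms(2,3,5) by blast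
    then show False using assms(2,4) by blast
  qed
  then show ?thesis using assms(4) by blast
qed

text \<open>Every edge of X has exactly one endpoint covered by Y (for edges that are 2-sets).\<close>
definition half_covered_by :: "'a set set \<Rightarrow> 'a set set \<Rightarrow> bool" where
  "half_covered_by X Y \<longleftrightarrow> (\<forall>e\<in>X. e \<inter> \<Union>Y \<noteq> {} \<and> \<not> e \<subseteq> \<Union>Y)"

lemma half_covered_byI:
  assumes "\<And>e. e \<in> X \<Longrightarrow> e \<inter> \<Union>Y \<noteq> {}" and "\<And>e. e \<in> X \<Longrightarrow> \<not> e \<subseteq> \<Union>Y"
  shows "half_covered_by X Y"
  using assms unfolding half_covered_by_def by blast

lemma half_covered_byD:
  assumes "half_covered_by X Y" "e \<in> X"
  shows "\<exists>f\<in>Y. \<exists>b. b \<in> e \<and> b \<in> f" and "\<not> e \<subseteq> \<Union>Y"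
  using assms unfolding half_covered_by_def by blast+

lemma half_covered_edge_path:
  assumes G: "graph V E" and X: "matching E X" and Y: "matching E Y"
    and XY: "half_covered_by X Y" and YX: "half_covered_by Y X" and e: "e \<in> X"
  shows "\<exists>a b c. distinct [a, b, c] \<and> e = {a, b} \<and> {b, c} \<in> Y \<and>
           (\<forall>g\<in>X \<union> Y. g \<inter> {a, b, c} \<noteq> {} \<longrightarrow> g = {a, b} \<or> g = {b, c})"
proof -
  have XE: "X \<subseteq> E" and YE: "Y \<subseteq> E" using X Y unfolding matching_def by auto
  obtain f b where f: "f \<in> Y" "b \<in> e" "b \<in> f"
    using half_covered_byD(1)[OF XY e] by blast
  obtain a where a: "e = {a, b}" "a \<noteq> b"
    using graph_edge_at[OF G _ f(2)] e XE by blast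
  obtain c where f_cb: "f = {c, b}" and c_ne: "c \<noteq> b"
    using graph_edge_at[OF G _ f(3)] f(1) YE by blast
  have c: "f = {b, c}" "c \<noteq> b" using f_cb c_ne by (simp_all add: insert_commute)
  have a_free: "a \<notin> \<Union>Y"
  proof
    assume "a \<in> \<Union>Y"
    then have "e \<subseteq> \<Union>Y" using a(1) f(1,3) by blast
    then show False using half_covered_byD(2)[OF XY e] by contradiction
  qed
  have c_free: "c \<notin> \<Union>X"
  proof
    assume "c \<in> \<Union>X"
    then have "f \<subseteq> \<Union>X" using c(1) e f(2) by blast
    then show False using half_covered_byD(2)[OF YX f(1)] by contradiction
  qed
  have "a \<noteq> c" using a_free f(1) c(1) by blast
  then have "distinct [a, b, c]" using a(2) c(2) by auto
  moreover have "g = {a, b} \<or> g = {b, c}"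
    if g_in: "g \<in> X \<union> Y" and g_meets: "g \<inter> {a, b, c} \<noteq> {}" for g
  proof (cases "g \<in> X")
    case True
    then have "c \<notin> g" using c_free by blast
    then obtain z where "z \<in> g" "z \<in> e" using g_meets a(1) by blast
    then have "g = e" by (rule matching_unique_edge[OF X True e])
    then show ?thesis using a(1) by simp
  next
    case False
    then have "g \<in> Y" using g_in by blast
    then have "a \<notin> g" using a_free by blast
    then obtain z where "z \<in> g" "z \<in> f" using g_meets c(1) by blast
    then have "g = f" by (rule matching_unique_edge[OF Y \<open>g \<in> Y\<close> f(1)])
    then show ?thesis using c(1) by simp
  qed
  ultimately show ?thesis using a(1) c(1) f(1) by blast
qed

lemma path2_component:
  assumes abc: "distinct [a, b, c]" "{a, b} \<in> D" "{b, c} \<in> D"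
    and closed: "\<forall>g\<in>D. g \<inter> {a, b, c} \<noteq> {} \<longrightarrow> g = {a, b} \<or> g = {b, c}"
    and nonempty: "{} \<notin> D"
    and u: "u \<in> {a, b, c}"
  shows "is_path2 {v \<in> \<Union>D. (adj D)\<^sup>*\<^sup>* u v} D"
proof -
  have reach_inside: "v \<in> {a, b, c}" if "(adj D)\<^sup>*\<^sup>* u v" for v
    using that
  proof (induction rule: rtranclp_induct)
    case base
    show ?case using u .
  next
    case (step v w)
    have "{v, w} \<in> D" using step(2) by (simp add: adj_def)
    moreover have "{v, w} \<inter> {a, b, c} \<noteq> {}" using step.IH by auto
    ultimately have "{v, w} = {a, b} \<or> {v, w} = {b, c}" by (rule closed[rule_format])
    then show ?case by auto
  qed
  have adj: "adj D a b" "adj D b a" "adj D b c" "adj D c b"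
    using abc(2,3) by (auto simp: adj_def insert_commute)
  have "(adj D)\<^sup>*\<^sup>* u b" using u adj by auto
  then have reach_all: "(adj D)\<^sup>*\<^sup>* u v" if "v \<in> {a, b, c}" for v
    using that adj by (auto intro: rtranclp.rtrancl_into_rtrancl)
  have component: "{v \<in> \<Union>D. (adj D)\<^sup>*\<^sup>* u v} = {a, b, c}"
    using reach_inside reach_all abc(2,3) by blast
  have "g \<in> {{a, b}, {b, c}}" if "g \<in> D" "g \<subseteq> {a, b, c}" for g
  proof -
    have "g \<noteq> {}" using that(1) nonempty by blast
    then have "g \<inter> {a, b, c} \<noteq> {}" using that(2) by blast
    then show ?thesis using closed that(1) by blast
  qed
  then have "{e \<in> D. e \<subseteq> {a, b, c}} = {{a, b}, {b, c}}" using abc(2,3) by auto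
  then show ?thesis unfolding is_path2_def component using abc(1) by blast
qed

lemma half_covered_components_are_paths:
  assumes G: "graph V E" and X: "matching E X" and Y: "matching E Y"
    and XY: "half_covered_by X Y" and YX: "half_covered_by Y X"
  shows "\<forall>C \<in> components (\<Union>(X \<union> Y)) (X \<union> Y). is_path2 C (X \<union> Y)"
proof
  fix C assume "C \<in> components (\<Union>(X \<union> Y)) (X \<union> Y)"
  then obtain u where "u \<in> \<Union>(X \<union> Y)"
    and C: "C = {v \<in> \<Union>(X \<union> Y). (adj (X \<union> Y))\<^sup>*\<^sup>* u v}"
    unfolding components_def by blast
  then obtain g where g: "g \<in> X \<union> Y" "u \<in> g" by blast
  have "{} \<notin> E" using G unfolding graph_def by blast
  then have nonempty: "{} \<notin> X \<union> Y" using X Y unfolding matching_def by blast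
  obtain a b c where path: "distinct [a, b, c]" "g = {a, b}" "{b, c} \<in> X \<union> Y"
    and closed: "\<forall>h\<in>X \<union> Y. h \<inter> {a, b, c} \<noteq> {} \<longrightarrow> h = {a, b} \<or> h = {b, c}"
  proof (cases "g \<in> X")
    case True
    show ?thesis using half_covered_edge_path[OF G X Y XY YX True] that by blast
  next
    case False
    then have "g \<in> Y" using g(1) by blast
    from half_covered_edge_path[OF G Y X YX XY this] obtain a b c
      where "distinct [a, b, c]" "g = {a, b}" "{b, c} \<in> X"
        "\<forall>h\<in>Y \<union> X. h \<inter> {a, b, c} \<noteq> {} \<longrightarrow> h = {a, b} \<or> h = {b, c}"
      by blast
    then show ?thesis using that[of a b c] by (simp add: Un_commute)
  qed
  have "u \<in> {a, b, c}" using g(2) path(2) by blast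
  moreover have "{a, b} \<in> X \<union> Y" using g(1) path(2) by simp
  ultimately show "is_path2 C (X \<union> Y)"
    unfolding C using path2_component[OF path(1) _ path(3) closed nonempty] by blast
qed

lemma deletion_counting:
  assumes fin: "finite E" and FL: "matching E FL" and Fl: "matching E Fl"
    and same_card: "card FL = card Fl"
    and M: "matching (E - FL) M" and cM: "card M = 2 * nu (E - Fl)"
  shows "Fl - FL \<subseteq> M" and "card (M - Fl) = nu (E - Fl)"
proof -
  have finE': "finite (E - Fl)" using fin by simp
  have finM: "finite M" using matching_finite[OF _ M] fin by simp
  have finL: "finite FL" and finl: "finite Fl"
    using matching_finite[OF fin FL] matching_finite[OF fin Fl] .
  have "matching (E - Fl) (FL - Fl)"
    using FL unfolding matching_def by blast
  then have A_le: "card (FL - Fl) \<le> nu (E - Fl)" by (rule card_le_nu[OF finE'])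
  have A_eq_B: "card (FL - Fl) = card (Fl - FL)"
    using card_Diff_subset_Int[of FL Fl] card_Diff_subset_Int[of Fl FL] finL finl same_card
    by (simp add: Int_commute)
  have "matching (E - Fl) (M - Fl)"
    using M unfolding matching_def by blast
  then have MFl_le: "card (M - Fl) \<le> nu (E - Fl)" by (rule card_le_nu[OF finE'])
  have sub: "M \<inter> Fl \<subseteq> Fl - FL"
    using M unfolding matching_def by blast
  then have B_ge: "card (M \<inter> Fl) \<le> card (Fl - FL)" using finl by (simp add: card_mono)
  have split: "card M = card (M - Fl) + card (M \<inter> Fl)"
    using card_Diff_subset_Int[of M Fl] card_mono[of M "M \<inter> Fl"] finM by simp
  have eq: "card (M \<inter> Fl) = card (Fl - FL)" "card (M - Fl) = nu (E - Fl)"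
    using A_le A_eq_B MFl_le B_ge split cM by linarith+
  have "M \<inter> Fl = Fl - FL" using card_subset_eq[OF _ sub eq(1)] finl by blast
  then show "Fl - FL \<subseteq> M" by blast
  show "card (M - Fl) = nu (E - Fl)" using eq(2) .
qed

text \<open>(i) No edge of F_L - F_l has both endpoints covered by F_l - F_L: it would extend the
  maximum matching M - F_l of G - F_l.\<close>
lemma no_edge_inside_B:
  assumes fin: "finite E" and FL: "matching E FL" and M: "matching (E - FL) M"
    and BM: "Fl - FL \<subseteq> M" and cM: "card (M - Fl) = nu (E - Fl)"
    and e: "e \<in> FL - Fl"
  shows "\<not> e \<subseteq> \<Union>(Fl - FL)"
proof
  assume covered: "e \<subseteq> \<Union>(Fl - FL)"
  have "g \<inter> e = {}" if g: "g \<in> M - Fl" for g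
  proof (rule equals0I)
    fix z assume z: "z \<in> g \<inter> e"
    then obtain f where f: "f \<in> Fl - FL" "z \<in> f" using covered by blast
    have "g = f" using matching_unique_edge[OF M _ _ _ f(2), of g] g f(1) BM z by blast
    then show False using g f(1) by blast
  qed
  moreover have "matching (E - Fl) (M - Fl)"
    using M unfolding matching_def by blast
  moreover have "e \<in> (E - Fl) - (M - Fl)"
    using M FL e unfolding matching_def by blast
  ultimately have "card (M - Fl) < nu (E - Fl)"
    using free_edge_card_lt_nu[of "E - Fl" "M - Fl" e] fin by blast
  then show False using cM by simp
qed

text \<open>(ii) No edge f of F_l - F_L has both endpoints covered by F_L - F_l: replacing f by the two
  edges of F_L - F_l at its ends would give a matching of G larger than F_l.\<close>
lemma no_edge_inside_A:
  assumes G: "graph V E" and FL: "matching E FL" and Fl: "max_matching E Fl"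
    and inside_B: "\<And>e. e \<in> FL - Fl \<Longrightarrow> \<not> e \<subseteq> \<Union>(Fl - FL)"
    and f: "f \<in> Fl - FL"
  shows "\<not> f \<subseteq> \<Union>(FL - Fl)"
proof
  assume covered: "f \<subseteq> \<Union>(FL - Fl)"
  have fin: "finite E" using G by (rule graph_finite_edges)
  have ml: "matching E Fl" and cl: "card Fl = nu E"
    using Fl unfolding max_matching_def by auto
  have "f \<in> E" using f ml unfolding matching_def by blast
  then obtain x y where xy: "f = {x, y}" "x \<noteq> y"
    using G unfolding graph_def by blast
  obtain e1 e2 where e: "e1 \<in> FL - Fl" "x \<in> e1" "e2 \<in> FL - Fl" "y \<in> e2"
    using covered xy(1) by blast
  have E: "e1 \<in> E" "e2 \<in> E" using e FL unfolding matching_def by auto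
  have far_free: "u \<notin> \<Union>Fl" if e': "e' \<in> FL - Fl" "e' = {u, v}" "v \<in> f" for e' u v
  proof
    assume "u \<in> \<Union>Fl"
    then obtain g where g: "g \<in> Fl" "u \<in> g" by blast
    have "g \<in> Fl - FL" by (rule covering_edge_in_difference[OF FL e'(1) _ g]) (simp add: e'(2))
    then have "e' \<subseteq> \<Union>(Fl - FL)" using g(2) e'(2,3) f by blast
    then show False using inside_B[OF e'(1)] by contradiction
  qed
  obtain a where a: "e1 = {a, x}" "a \<noteq> x" using graph_edge_at[OF G E(1) e(2)] by blast
  obtain d where d: "e2 = {d, y}" "d \<noteq> y" using graph_edge_at[OF G E(2) e(4)] by blast
  have a_free: "a \<notin> \<Union>Fl" using far_free[OF e(1) a(1)] xy(1) by simp
  have d_free: "d \<notin> \<Union>Fl" using far_free[OF e(3) d(1)] xy(1) by simp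
  have "e1 \<noteq> e2"
  proof
    assume "e1 = e2"
    then have "y = a" using e(4) a(1) xy(2) by auto
    then show False using a_free f xy(1) by blast
  qed
  then have disjoint: "e1 \<inter> e2 = {}"
    using FL e(1,3) unfolding matching_def by blast
  have avoid: "g \<inter> e' = {}"
    if g: "g \<in> Fl - {f}" and e': "e' = {u, v}" "u \<notin> \<Union>Fl" "v \<in> f" for g e' u v
  proof -
    have "v \<notin> g" using matching_unique_edge[OF ml _ _ _ e'(3), of g] g f by blast
    moreover have "u \<notin> g" using e'(2) g by blast
    ultimately show ?thesis using e'(1) by blast
  qed
  define N where "N = insert e2 (Fl - {f})"
  have "matching E (Fl - {f})" using ml by (rule matching_Diff)
  then have N: "matching E N"
    unfolding N_def using avoid[OF _ d(1) d_free] xy(1) E(2)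
    by (intro matching_insert) auto
  have "finite Fl" using matching_finite[OF fin ml] .
  then have "card N = card Fl"
    unfolding N_def using e(3) f card_Suc_Diff1[of Fl f] by simp
  moreover have "\<forall>g\<in>N. g \<inter> e1 = {}"
    unfolding N_def using disjoint avoid[OF _ a(1) a_free] xy(1) by blast
  moreover have "e1 \<in> E - N" unfolding N_def using E(1) e(1) \<open>e1 \<noteq> e2\<close> by blast
  ultimately have "card Fl < nu E" using free_edge_card_lt_nu[OF fin N] by simp
  then show False using cl by simp
qed

lemma edge_meets_max_matching:
  assumes fin: "finite E" and P: "matching E P" and Q: "max_matching E Q" and e: "e \<in> P - Q"
  shows "e \<inter> \<Union>(Q - P) \<noteq> {}"
proof -
  have mQ: "matching E Q" and cQ: "card Q = nu E" using Q unfolding max_matching_def by auto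
  have "e \<inter> \<Union>Q \<noteq> {}"
  proof
    assume "e \<inter> \<Union>Q = {}"
    then have "\<forall>g\<in>Q. g \<inter> e = {}" by blast
    moreover have "e \<in> E - Q" using P e unfolding matching_def by blast
    ultimately have "card Q < nu E" using free_edge_card_lt_nu[OF fin mQ] by blast
    then show False using cQ by simp
  qed
  then obtain x g where "x \<in> e" "g \<in> Q" "x \<in> g" by blast
  then have "g \<in> Q - P" using covering_edge_in_difference[OF P e] by blast
  then show ?thesis using \<open>x \<in> e\<close> \<open>x \<in> g\<close> by blast
qed

theorem claim2:
  fixes V :: "'a set" and E FL Fl :: "'a set set"
  assumes "graph V E" and "connected V E" and "card V \<ge> 3"
    and "LL E = 2 * ll E"
    and "max_matching E FL" and "max_matching E Fl"
    and "nu (E - FL) = LL E" and "nu (E - Fl) = ll E"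
  shows "\<forall>C \<in> components (\<Union>((FL - Fl) \<union> (Fl - FL))) ((FL - Fl) \<union> (Fl - FL)).
           is_path2 C ((FL - Fl) \<union> (Fl - FL))"
proof -
  have fin: "finite E" using assms(1) by (rule graph_finite_edges)
  have FL: "matching E FL" and Fl: "matching E Fl" and "card FL = card Fl"
    using assms(5,6) unfolding max_matching_def by auto
  obtain M where M: "matching (E - FL) M" and "card M = nu (E - FL)"
    using nu_attained[OF finite_Diff[OF fin]] by blast
  then have "card M = 2 * nu (E - Fl)" using assms(4,7,8) by simp
  note counting = deletion_counting[OF fin FL Fl \<open>card FL = card Fl\<close> M this]
  have inside_B: "\<not> e \<subseteq> \<Union>(Fl - FL)" if "e \<in> FL - Fl" for e
    using no_edge_inside_B[OF fin FL M counting that] .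
  have inside_A: "\<not> f \<subseteq> \<Union>(FL - Fl)" if "f \<in> Fl - FL" for f
    using no_edge_inside_A[OF assms(1) FL assms(6) inside_B that] .
  have AB: "half_covered_by (FL - Fl) (Fl - FL)"
    by (rule half_covered_byI[OF edge_meets_max_matching[OF fin FL assms(6)] inside_B])
  have BA: "half_covered_by (Fl - FL) (FL - Fl)"
    by (rule half_covered_byI[OF edge_meets_max_matching[OF fin Fl assms(5)] inside_A])
  show ?thesis
    by (rule half_covered_components_are_paths[OF assms(1) matching_Diff[OF FL] matching_Diff[OF Fl] AB BA])
qed

end
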